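(* For every admissible word $\omega$, $V_\omega=B_\omega\cap Z_\omega=\mathbb{Z}\{\delta^j_\omega: j\in X(\omega)\}$.
   Context: Let $[n]=\{1,\dots,n\}$, $e_1,\dots,e_n$ the standard basis of $\mathbb{Z}^n$. The alphabet is $L=\{1,\dots,n,1^\infty,\dots,n^\infty,\mathsf{ext}\}$ (each $j^\infty$ and $\mathsf{ext}$ is a single letter); $\varepsilon$ is the empty word, $*$ concatenation. A finite word $\omega$ over $L$ is admissible if: (i) whenever $j^\infty$ occurs, the subsequent part of $\omega$ contains neither $j$ nor $j^\infty$; (ii) the only letter allowed directly after $j^\infty$ is $\mathsf{ext}$; (iii) every $\mathsf{ext}$ occurs directly after some $j^\infty$. $X(\omega)$ is the set of $j$ such that $j^\infty\mathsf{ext}$ is a subword of $\omega$, and $Y(\omega)=[n]\setminus X(\omega)$. Define recursively $\delta^i_\omega\in\mathbb{Z}^n$: $\delta^i_\varepsilon=e_i$; $\delta^i_{\omega*j^\infty}=\delta^i_{\omega*\mathsf{ext}}=\delta^i_\omega$; $\delta^i_{\omega*j}=\delta^i_\omega$ if $i\in X(\omega)\cup\{j\}$ and $\delta^i_{\omega*j}=\delta^i_\omega-\delta^j_\omega$ if $i\in Y(\omega)\setminus\{j\}$. Define (Minkowski sums) $B_\varepsilon=\{0\}$, $B_{\omega*j}=B_\omega+\{0,\delta^j_\omega\}$, $B_{\omega*j^\infty}=B_\omega+\mathbb{Z}_{\ge0}\delta^j_\omega$, $B_{\omega*j^\infty*\mathsf{ext}}=B_\omega+\mathbb{Z}\delta^j_\omega$,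 and $Z_\omega=-B_\omega$. Define $V_\varepsilon=\{0\}$, $V_{\omega*j}=V_{\omega*j^\infty}=V_\omega$, $V_{\omega*j^\infty*\mathsf{ext}}=V_\omega+\mathbb{Z}\delta^j_\omega$. *)

theory Defs
  imports Main "HOL-Library.Function_Algebras"
begin

text \<open>Letters of the alphabet L: Fin j is the letter j, Inf j is j^infinity, Ext is ext.
Vectors of Z^n are represented as functions nat => int (coordinates 1..n);
all vectors arising here are supported on {1..n}.\<close>

datatype letter = Fin nat | Inf nat | Ext

type_synonym vec = "nat \<Rightarrow> int"

definition unitv :: "nat \<Rightarrow> vec" where
  "unitv i = (\<lambda>k. if k = i then 1 else 0)"

definition msum :: "vec set \<Rightarrow> vec set \<Rightarrow> vec set" where
  "msum A C = {a + c | a c. a \<in> A \<and> c \<in> C}"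

definition letter_ok :: "nat \<Rightarrow> letter \<Rightarrow> bool" where
  "letter_ok n l = (case l of Fin j \<Rightarrow> j \<in> {1..n} | Inf j \<Rightarrow> j \<in> {1..n} | Ext \<Rightarrow> True)"

definition admissible :: "nat \<Rightarrow> letter list \<Rightarrow> bool" where
  "admissible n w \<longleftrightarrow>
     (\<forall>l\<in>set w. letter_ok n l) \<and>
     (\<forall>p q j. p < q \<and> q < length w \<and> w ! p = Inf j \<longrightarrow> w ! q \<noteq> Fin j \<and> w ! q \<noteq> Inf j) \<and>
     (\<forall>p j. Suc p < length w \<and> w ! p = Inf j \<longrightarrow> w ! Suc p = Ext) \<and>
     (\<forall>p. p < length w \<and> w ! p = Ext \<longrightarrow> 0 < p \<and> (\<exists>j. w ! (p - 1) = Inf j))"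

definition Xw :: "letter list \<Rightarrow> nat set" where
  "Xw w = {j. \<exists>u v. w = u @ [Inf j, Ext] @ v}"

definition Yw :: "nat \<Rightarrow> letter list \<Rightarrow> nat set" where
  "Yw n w = {1..n} - Xw w"

text \<open>Recursions on the word are written on the reversed word (head = last letter).\<close>

fun deltaR :: "nat \<Rightarrow> nat \<Rightarrow> letter list \<Rightarrow> vec" where
  "deltaR n i [] = unitv i"
| "deltaR n i (Inf j # r) = deltaR n i r"
| "deltaR n i (Ext # r) = deltaR n i r"
| "deltaR n i (Fin j # r) =
     (if i \<in> Yw n (rev r) - {j} then deltaR n i r - deltaR n j r else deltaR n i r)"

definition delta :: "nat \<Rightarrow> nat \<Rightarrow> letter list \<Rightarrow> vec" where
  "delta n i w = deltaR n i (rev w)"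

fun BR :: "nat \<Rightarrow> letter list \<Rightarrow> vec set" where
  "BR n [] = {0}"
| "BR n (Fin j # r) = msum (BR n r) {0, deltaR n j r}"
| "BR n (Inf j # r) = msum (BR n r) {of_nat k * deltaR n j r | k. True}"
| "BR n (Ext # Inf j # r) = msum (BR n r) {of_int k * deltaR n j r | k. True}"
| "BR n (Ext # r) = BR n r" \<comment> \<open>does not occur for admissible words\<close>

definition B :: "nat \<Rightarrow> letter list \<Rightarrow> vec set" where
  "B n w = BR n (rev w)"

definition Z :: "nat \<Rightarrow> letter list \<Rightarrow> vec set" where
  "Z n w = uminus ` B n w"

fun VR :: "nat \<Rightarrow> letter list \<Rightarrow> vec set" where
  "VR n [] = {0}"
| "VR n (Fin j # r) = VR n r"
| "VR n (Inf j # r) = VR n r"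
| "VR n (Ext # Inf j # r) = msum (VR n r) {of_int k * deltaR n j r | k. True}"
| "VR n (Ext # r) = VR n r" \<comment> \<open>does not occur for admissible words\<close>

definition V :: "nat \<Rightarrow> letter list \<Rightarrow> vec set" where
  "V n w = VR n (rev w)"

definition spanX :: "nat \<Rightarrow> letter list \<Rightarrow> vec set" where
  "spanX n w = {v. \<exists>c :: nat \<Rightarrow> int. v = (\<lambda>k. \<Sum>j\<in>Xw w. c j * delta n j w k)}"

end

theory Submission
  imports Defs
begin

text \<open>Along the word the vectors delta^k, k = 1..n, remain a basis of Z^n: the letter j
  replaces delta^i by delta^i - delta^j for i in Y - {j}, an elementary change of basis.
  In this basis every element of B has nonnegative coordinates at the indices in Y: the letters
  j and j^infinity add nonnegative multiples of delta^j, the letter ext after j^infinity adds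
  integer multiples of delta^j but removes j from Y, and the change of basis caused by j only
  adds the coordinates at Y - {j} to the one at j. An element of B \<inter> Z therefore has
  vanishing coordinates at Y, i.e. it lies in the integer span of the delta^j with j in X.
  That span is V, which lies in B and is symmetric, hence also in Z.\<close>

lemma of_int_fun_apply [simp]: "(of_int k :: 'a \<Rightarrow> 'b::ring_1) x = of_int k"
proof (cases k rule: int_cases)
  case (nonneg m) then show ?thesis by simp
next
  case (neg m) then show ?thesis by (simp del: of_nat_Suc)
qed

lemma Xw_Nil [simp]: "Xw [] = {}"
  by (auto simp: Xw_def)

lemma Xw_snoc: "Xw (u @ [a]) = Xw u \<union> {k. a = Ext \<and> u \<noteq> [] \<and> last u = Inf k}"
proof (intro equalityI subsetI)
  fix j assume "j \<in> Xw (u @ [a])"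
  then obtain x v where e: "u @ [a] = x @ [Inf j, Ext] @ v" by (auto simp: Xw_def)
  show "j \<in> Xw u \<union> {k. a = Ext \<and> u \<noteq> [] \<and> last u = Inf k}"
  proof (cases v rule: rev_cases)
    case Nil then show ?thesis using e by auto
  next
    case (snoc v' b) then have "u = x @ [Inf j, Ext] @ v'" using e by auto
    then show ?thesis by (auto simp: Xw_def)
  qed
next
  fix j assume "j \<in> Xw u \<union> {k. a = Ext \<and> u \<noteq> [] \<and> last u = Inf k}"
  then show "j \<in> Xw (u @ [a])"
  proof
    assume "j \<in> Xw u"
    then obtain x v where "u = x @ [Inf j, Ext] @ v" by (auto simp: Xw_def)
    then have "u @ [a] = x @ [Inf j, Ext] @ (v @ [a])" by simp
    then show ?thesis by (auto simp: Xw_def)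
  next
    assume h: "j \<in> {k. a = Ext \<and> u \<noteq> [] \<and> last u = Inf k}"
    then have "u = butlast u @ [Inf j]" by (metis (mono_tags) append_butlast_last_id mem_Collect_eq)
    then have "u @ [a] = butlast u @ [Inf j, Ext] @ []" using h
      by (metis append.assoc append_Cons append_Nil append_Nil2 mem_Collect_eq)
    then show ?thesis unfolding Xw_def by blast
  qed
qed

lemma Xw_snoc_Fin [simp]: "Xw (u @ [Fin j]) = Xw u"
  by (simp add: Xw_snoc)

lemma Xw_snoc_Inf [simp]: "Xw (u @ [Inf j]) = Xw u"
  by (simp add: Xw_snoc)

lemma Xw_snoc_Inf_Ext [simp]: "Xw (u @ [Inf j, Ext]) = insert j (Xw u)"
  using Xw_snoc[of "u @ [Inf j]" Ext] by auto

lemma Yw_snoc_Fin [simp]: "Yw n (u @ [Fin j]) = Yw n u"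
  by (simp add: Yw_def)

lemma Yw_snoc_Inf [simp]: "Yw n (u @ [Inf j]) = Yw n u"
  by (simp add: Yw_def)

lemma Yw_snoc_Inf_Ext [simp]: "Yw n (u @ [Inf j, Ext]) = Yw n u - {j}"
  by (auto simp: Yw_def)

lemma finite_Yw [simp]: "finite (Yw n w)"
  by (rule finite_subset[of _ "{1..n}"]) (auto simp: Yw_def)

lemma admissible_appendD:
  assumes "admissible n (u @ v)" shows "admissible n u"
proof -
  have nth: "(u @ v) ! i = u ! i" if "i < length u" for i
    using that by (simp add: nth_append)
  note adm = assms[unfolded admissible_def]
  show ?thesis unfolding admissible_def
  proof (intro conjI allI impI)
    show "\<forall>l\<in>set u. letter_ok n l" using adm by simp
  next
    fix p q j assume "p < q \<and> q < length u \<and> u ! p = Inf j"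
    then show "u ! q \<noteq> Fin j" "u ! q \<noteq> Inf j"
      using adm nth[of p] nth[of q] by auto
  next
    fix p j assume "Suc p < length u \<and> u ! p = Inf j"
    then show "u ! Suc p = Ext"
      using adm nth[of p] nth[of "Suc p"] by auto
  next
    fix p assume p: "p < length u \<and> u ! p = Ext"
    then have "0 < p \<and> (\<exists>j. (u @ v) ! (p - 1) = Inf j)"
      using adm nth[of p] by auto
    then show "0 < p" "\<exists>j. u ! (p - 1) = Inf j"
      using p nth[of "p - 1"] by (auto simp: less_imp_diff_less)
  qed
qed

lemma admissible_letter_ok: "admissible n w \<Longrightarrow> \<forall>l\<in>set w. letter_ok n l"
  by (simp add: admissible_def)

lemma admissible_Xw_subset: "admissible n w \<Longrightarrow> Xw w \<subseteq> {1..n}"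
  by (auto simp: Xw_def admissible_def letter_ok_def)

lemma admissible_snoc_Fin: "admissible n (u @ [Fin j]) \<Longrightarrow> j \<in> Yw n u"
proof -
  assume adm: "admissible n (u @ [Fin j])"
  have "j \<in> {1..n}" using adm by (simp add: admissible_def letter_ok_def)
  moreover have "j \<notin> Xw u"
  proof
    assume "j \<in> Xw u"
    then obtain x v where u: "u = x @ [Inf j, Ext] @ v" by (auto simp: Xw_def)
    let ?w = "u @ [Fin j]"
    have "length x < length u" "length u < length ?w" "?w ! length x = Inf j" "?w ! length u = Fin j"
      using u by (auto simp: nth_append)
    then show False using adm unfolding admissible_def by blast
  qed
  ultimately show ?thesis by (simp add: Yw_def)
qed

lemma admissible_snoc_Inf_Ext: "admissible n (u @ [Inf j, Ext]) \<Longrightarrow> j \<notin> Xw u"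
proof
  assume adm: "admissible n (u @ [Inf j, Ext])" and "j \<in> Xw u"
  then obtain x v where u: "u = x @ [Inf j, Ext] @ v" by (auto simp: Xw_def)
  let ?w = "u @ [Inf j, Ext]"
  have "length x < length u" "length u < length ?w" "?w ! length x = Inf j" "?w ! length u = Inf j"
    using u by (auto simp: nth_append)
  then show False using adm unfolding admissible_def by blast
qed

lemma admissible_rev_Ext: "admissible n (rev (Ext # r)) \<Longrightarrow> \<exists>j r'. r = Inf j # r'"
proof -
  assume adm: "admissible n (rev (Ext # r))"
  let ?w = "rev r @ [Ext]"
  have "length r < length ?w" "?w ! length r = Ext" by (simp_all add: nth_append)
  then obtain j where "0 < length r" "?w ! (length r - 1) = Inf j"
    using adm unfolding admissible_def by auto
  then show ?thesis by (cases r) (auto simp: nth_append)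
qed

text \<open>coordR n r v is the coordinate vector of v in the basis deltaR n k r, k = 1..n
  (sum_coordR_deltaR below); the letter Fin j is undone by crediting the coordinates at
  Y - {j} to the one at j.\<close>

fun coordR :: "nat \<Rightarrow> letter list \<Rightarrow> vec \<Rightarrow> vec" where
  "coordR n [] v = v"
| "coordR n (Fin j # r) v =
     (coordR n r v)(j := coordR n r v j + (\<Sum>i\<in>Yw n (rev r) - {j}. coordR n r v i))"
| "coordR n (Inf j # r) v = coordR n r v"
| "coordR n (Ext # r) v = coordR n r v"

lemma coordR_add: "coordR n r (v + u) = coordR n r v + coordR n r u"
  by (induction n r v rule: coordR.induct) (auto simp: sum.distrib fun_eq_iff)

lemma coordR_uminus: "coordR n r (- v) = - coordR n r v"
  by (induction n r v rule: coordR.induct) (auto simp: sum_negf fun_eq_iff)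

lemma coordR_diff: "coordR n r (v - u) = coordR n r v - coordR n r u"
  by (metis coordR_add coordR_uminus diff_conv_add_uminus)

lemma coordR_zero: "coordR n r 0 = 0"
  by (metis coordR_diff diff_self)

lemma coordR_scale: "coordR n r (of_int m * v) = of_int m * coordR n r v"
  by (induction n r v rule: coordR.induct) (auto simp: sum_distrib_left distrib_left fun_eq_iff)

lemma coordR_deltaR: "coordR n r (deltaR n i r) = unitv i"
proof (induction r arbitrary: i)
  case (Cons a r)
  then show ?case
    by (cases a) (auto simp: coordR_diff sum_subtractf unitv_def fun_eq_iff)
qed simp

lemma deltaR_outside:
  assumes "\<forall>l\<in>set r. letter_ok n l" "i \<in> {1..n}" "x \<notin> {1..n}"
  shows "deltaR n i r x = 0"
  using assms
proof (induction r arbitrary: i)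
  case (Cons a r) then show ?case by (cases a) (auto simp: letter_ok_def)
qed (auto simp: unitv_def)

lemma BR_outside:
  assumes "\<forall>l\<in>set r. letter_ok n l" "b \<in> BR n r" "x \<notin> {1..n}"
  shows "b x = 0"
  using assms
  by (induction n r arbitrary: b rule: BR.induct)
     (auto simp: msum_def letter_ok_def deltaR_outside)

lemma sum_coordR_deltaR:
  assumes ok: "\<forall>l\<in>set r. letter_ok n l" and supp: "\<forall>x. x \<notin> {1..n} \<longrightarrow> v x = 0"
  shows "v x = (\<Sum>k\<in>{1..n}. coordR n r v k * deltaR n k r x)"
  using ok
proof (induction r)
  case Nil
  have "(\<Sum>k\<in>{1..n}. v k * unitv k x) = (\<Sum>k\<in>{1..n}. if x = k then v x else 0)"
    by (rule sum.cong) (auto simp: unitv_def)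
  also have "\<dots> = v x" using supp by auto
  finally show ?case by simp
next
  case (Cons a r)
  then have IH: "v x = (\<Sum>k\<in>{1..n}. coordR n r v k * deltaR n k r x)" by simp
  show ?case
  proof (cases a)
    case (Fin j)
    have j: "j \<in> {1..n}" using Cons.prems Fin by (simp add: letter_ok_def)
    let ?Y = "Yw n (rev r) - {j}" and ?c = "coordR n r v"
    let ?S = "\<Sum>i\<in>?Y. ?c i" and ?v = "\<Sum>k\<in>{1..n}. ?c k * deltaR n k r x"
    have Y: "?Y \<subseteq> {1..n}" by (auto simp: Yw_def)
    \<comment> \<open>Coordinate j grows by ?S, and each delta^k with k in ?Y loses delta^j.\<close>
    have "(\<Sum>k\<in>{1..n}. coordR n (Fin j # r) v k * deltaR n k (Fin j # r) x)
        = (\<Sum>k\<in>{1..n}. (?c k + (if k = j then ?S else 0)) * deltaR n k r x)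
          - (\<Sum>k\<in>{1..n}. if k \<in> ?Y then ?c k * deltaR n j r x else 0)"
      by (simp add: sum_subtractf[symmetric] algebra_simps) (intro sum.cong; auto simp: algebra_simps)
    also have "\<dots> = (?v + ?S * deltaR n j r x) - ?S * deltaR n j r x"
    proof -
      have "(\<Sum>k\<in>{1..n}. (?c k + (if k = j then ?S else 0)) * deltaR n k r x)
          = ?v + (\<Sum>k\<in>{1..n}. if k = j then ?S * deltaR n j r x else 0)"
        by (simp add: distrib_right sum.distrib if_distrib[of "\<lambda>t. t * _"] cong: if_cong)
      moreover have "(\<Sum>k\<in>{1..n}. if k \<in> ?Y then ?c k * deltaR n j r x else 0)
          = (\<Sum>k\<in>{1..n} \<inter> ?Y. ?c k * deltaR n j r x)"
        by (rule sum.inter_restrict[symmetric]) simp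
      moreover have "{1..n} \<inter> ?Y = ?Y" using Y by blast
      ultimately show ?thesis using j by (simp add: sum_distrib_right)
    qed
    also have "\<dots> = v x" using IH by simp
    finally show ?thesis using Fin by simp
  qed (use IH in simp_all)
qed

lemma coordR_BR_nonneg:
  assumes "admissible n (rev r)" "b \<in> BR n r" "k \<in> Yw n (rev r)"
  shows "0 \<le> coordR n r b k"
  using assms
proof (induction n r arbitrary: b k rule: BR.induct)
  case (2 n j r)
  from "2.prems"(2) obtain b0 d where b: "b = b0 + d" "b0 \<in> BR n r" "d \<in> {0, deltaR n j r}"
    by (auto simp: msum_def)
  have IH: "0 \<le> coordR n r b0 i" if "i \<in> Yw n (rev r)" for i
    using "2.IH" "2.prems"(1) b(2) that by (auto dest: admissible_appendD)
  have j: "j \<in> Yw n (rev r)" using "2.prems"(1) by (simp add: admissible_snoc_Fin)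
  have "coordR n (Fin j # r) (deltaR n j r) = unitv j"
    using coordR_deltaR[of n "Fin j # r" j] by simp
  then have "0 \<le> coordR n (Fin j # r) d k"
    using b(3) by (auto simp: coordR_zero unitv_def simp del: coordR.simps)
  moreover have "0 \<le> coordR n (Fin j # r) b0 k"
    using IH j "2.prems"(3) by (auto intro!: add_nonneg_nonneg sum_nonneg)
  ultimately show ?case unfolding b(1) coordR_add by simp
next
  case (3 n j r)
  from "3.prems"(2) obtain b0 m where b: "b = b0 + of_int (int m) * deltaR n j r" "b0 \<in> BR n r"
    by (auto simp: msum_def)
  have "0 \<le> coordR n r b0 k"
    using "3.IH" "3.prems" b(2) by (auto dest: admissible_appendD)
  then show ?case
    unfolding b(1) coordR.simps coordR_add coordR_scale coordR_deltaR by (simp add: unitv_def)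
next
  case (4 n j r)
  from "4.prems"(2) obtain b0 m where b: "b = b0 + of_int m * deltaR n j r" "b0 \<in> BR n r"
    by (auto simp: msum_def)
  have "0 \<le> coordR n r b0 k" "k \<noteq> j"
    using "4.IH" "4.prems" b(2) by (auto dest: admissible_appendD)
  then show ?case
    unfolding b(1) coordR.simps coordR_add coordR_scale coordR_deltaR by (simp add: unitv_def)
qed (simp, (drule admissible_rev_Ext, simp)+)

definition int_span :: "(nat \<Rightarrow> vec) \<Rightarrow> nat set \<Rightarrow> vec set" where
  "int_span D S = {v. \<exists>c :: nat \<Rightarrow> int. v = (\<lambda>x. \<Sum>j\<in>S. c j * D j x)}"

lemma int_span_empty [simp]: "int_span D {} = {0}"
  by (auto simp: int_span_def)

lemma int_span_cong: "(\<And>j. j \<in> S \<Longrightarrow> D' j = D j) \<Longrightarrow> int_span D' S = int_span D S"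
  by (simp add: int_span_def cong: sum.cong)

lemma uminus_mem_int_span: "v \<in> int_span D S \<Longrightarrow> - v \<in> int_span D S"
proof -
  assume "v \<in> int_span D S"
  then obtain c where "v = (\<lambda>x. \<Sum>j\<in>S. c j * D j x)" by (auto simp: int_span_def)
  then have "- v = (\<lambda>x. \<Sum>j\<in>S. (- c j) * D j x)" by (simp add: fun_eq_iff sum_negf)
  then show ?thesis unfolding int_span_def by (intro CollectI exI[of _ "\<lambda>j. - c j"])
qed

lemma int_span_insert:
  assumes "finite S" "j \<notin> S"
  shows "int_span D (insert j S) = msum (int_span D S) {of_int m * D j | m. True}"
proof (intro equalityI subsetI)
  fix v assume "v \<in> int_span D (insert j S)"
  then obtain c where "v = (\<lambda>x. \<Sum>i\<in>insert j S. c i * D i x)" by (auto simp: int_span_def)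
  then have "v = (\<lambda>x. \<Sum>i\<in>S. c i * D i x) + of_int (c j) * D j"
    using assms by (simp add: fun_eq_iff)
  then show "v \<in> msum (int_span D S) {of_int m * D j | m. True}"
    unfolding msum_def int_span_def by blast
next
  fix v assume "v \<in> msum (int_span D S) {of_int m * D j | m. True}"
  then obtain c m where v: "v = (\<lambda>x. \<Sum>i\<in>S. c i * D i x) + of_int m * D j"
    unfolding msum_def int_span_def by blast
  have "(\<Sum>i\<in>S. (c(j := m)) i * D i x) = (\<Sum>i\<in>S. c i * D i x)" for x
    using assms(2) by (intro sum.cong) auto
  then have "v = (\<lambda>x. \<Sum>i\<in>insert j S. (c(j := m)) i * D i x)"
    using assms by (simp add: v fun_eq_iff)
  then show "v \<in> int_span D (insert j S)" unfolding int_span_def by blast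
qed

lemma VR_eq_int_span:
  "admissible n (rev r) \<Longrightarrow> VR n r = int_span (\<lambda>j. deltaR n j r) (Xw (rev r))"
proof (induction n r rule: VR.induct)
  case (2 n j r)
  have "int_span (\<lambda>k. deltaR n k (Fin j # r)) (Xw (rev r)) = int_span (\<lambda>k. deltaR n k r) (Xw (rev r))"
    by (rule int_span_cong) (auto simp: Yw_def)
  then show ?case using 2 by (simp add: admissible_appendD)
next
  case (3 n j r) then show ?case by (auto dest: admissible_appendD)
next
  case (4 n j r)
  then have adm: "admissible n (rev r)" by (simp add: admissible_appendD)
  have "finite (Xw (rev r))"
    using admissible_Xw_subset[OF adm] by (rule finite_subset) simp
  moreover have "j \<notin> Xw (rev r)" using "4.prems" by (simp add: admissible_snoc_Inf_Ext)
  ultimately show ?case using "4.IH"[OF adm] by (simp add: int_span_insert)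
qed (simp, (drule admissible_rev_Ext, simp)+)

lemma VR_subset_BR: "VR n r \<subseteq> BR n r"
proof (induction n r rule: VR.induct)
  case (2 n j r) then show ?case by (force simp: msum_def)
next
  case (3 n j r)
  have "v + of_nat 0 * deltaR n j r \<in> BR n (Inf j # r)" if "v \<in> BR n r" for v
    using that unfolding BR.simps msum_def by blast
  then show ?case using 3 by auto
next
  case (4 n j r) then show ?case unfolding VR.simps BR.simps msum_def by blast
qed auto

lemma spanX_eq_int_span: "spanX n w = int_span (\<lambda>j. delta n j w) (Xw w)"
  by (simp add: spanX_def int_span_def)

lemma V_eq_spanX: "admissible n w \<Longrightarrow> V n w = spanX n w"
  using VR_eq_int_span[of n "rev w"] by (simp add: V_def spanX_eq_int_span delta_def)

lemma V_subset_B: "V n w \<subseteq> B n w"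
  by (simp add: V_def B_def VR_subset_BR)

lemma B_Int_Z_subset_spanX:
  assumes adm: "admissible n w"
  shows "B n w \<inter> Z n w \<subseteq> spanX n w"
proof
  fix b assume b: "b \<in> B n w \<inter> Z n w"
  define r where "r = rev w"
  have adm_r: "admissible n (rev r)" using adm by (simp add: r_def)
  have b_B: "b \<in> BR n r" and mb_B: "- b \<in> BR n r"
    using b by (auto simp: B_def Z_def r_def)
  let ?c = "coordR n r b"
  have c0: "?c k = 0" if "k \<in> Yw n w" for k
    using coordR_BR_nonneg[OF adm_r b_B] coordR_BR_nonneg[OF adm_r mb_B] that
    by (force simp: r_def coordR_uminus)
  have "b x = (\<Sum>k\<in>Xw w. ?c k * deltaR n k r x)" for x
  proof -
    have ok: "\<forall>l\<in>set r. letter_ok n l" using adm by (simp add: r_def admissible_letter_ok)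
    have "b x = (\<Sum>k\<in>{1..n}. ?c k * deltaR n k r x)"
      by (rule sum_coordR_deltaR[OF ok]) (use BR_outside[OF ok b_B] in blast)
    also have "\<dots> = (\<Sum>k\<in>Xw w. ?c k * deltaR n k r x)"
      using admissible_Xw_subset[OF adm] c0 by (intro sum.mono_neutral_right) (auto simp: Yw_def)
    finally show ?thesis .
  qed
  then show "b \<in> spanX n w" by (auto simp: spanX_def delta_def r_def)
qed

theorem mainTheorem12:
  fixes n :: nat and w :: "letter list"
  assumes "admissible n w"
  shows "V n w = B n w \<inter> Z n w \<and> B n w \<inter> Z n w = spanX n w"
proof -
  have V: "V n w = spanX n w" using V_eq_spanX[OF assms] .
  have "spanX n w \<subseteq> B n w" using V V_subset_B by blast
  moreover have "spanX n w \<subseteq> Z n w"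
  proof
    fix v assume "v \<in> spanX n w"
    then have "- v \<in> B n w"
      using \<open>spanX n w \<subseteq> B n w\<close> uminus_mem_int_span by (auto simp: spanX_eq_int_span)
    then show "v \<in> Z n w" unfolding Z_def by (metis image_eqI minus_minus)
  qed
  ultimately show ?thesis using B_Int_Z_subset_spanX[OF assms] V by blast
qed

end
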